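(* Let $\mathbf L\in\mathbb R_+^{n\times k}$ and let $\boldsymbol\psi:\mathcal C\to\mathbb R_+^n$ be $\mathbf L$-calibrated. Then for every point $\mathbf z\in\mathcal S_\psi$ there exists $t\in[k]$ such that $\mathcal N^\psi(\mathbf z)\subseteq\mathcal Q^{\mathbf L}_t$.
   Context: Notation: $[m]=\{1,\dots,m\}$; $\Delta_n=\{\mathbf p\in\mathbb R_+^n:\sum_i p_i=1\}$. A loss matrix $\mathbf L\in\mathbb R_+^{n\times k}$ has columns $\boldsymbol\ell_t$, $t\in[k]$. Standing assumption: for each $t\in[k]$ there is $\mathbf p\in\Delta_n$ with $\operatorname{argmin}_{t'}\mathbf p^\top\boldsymbol\ell_{t'}=\{t\}$. A surrogate loss is $\boldsymbol\psi:\mathcal C\to\mathbb R_+^n$ with $\mathcal C\subseteq\mathbb R^d$ convex; $\mathcal R_\psi=\boldsymbol\psi(\mathcal C)$, $\mathcal S_\psi=\operatorname{conv}(\mathcal R_\psi)$. $\boldsymbol\psi$ is $\mathbf L$-calibrated if there is $\mathrm{pred}:\mathcal C\to[k]$ such that for all $\mathbf p\in\Delta_n$: $\inf_{\mathbf u\in\mathcal C:\mathrm{pred}(\mathbf u)\notin\operatorname{argmin}_t\mathbf p^\top\boldsymbol\ell_t}\mathbf p^\top\boldsymbol\psi(\mathbf u)>\inf_{\mathbf u\in\mathcal C}\mathbf p^\top\boldsymbol\psi(\mathbf u)$. Trigger probability set: $\mathcal Q^{\mathbf L}_t=\{\mathbf p\in\Delta_n: t\in\operatorname{argmin}_{t'\in[k]}\mathbf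 p^\top\boldsymbol\ell_{t'}\}$. Positive normal set at $\mathbf z\in\mathcal S_\psi$: $\mathcal N^\psi(\mathbf z)=\{\mathbf p\in\Delta_n:\mathbf p^\top\mathbf z=\inf_{\mathbf z'\in\mathcal S_\psi}\mathbf p^\top\mathbf z'\}$. *)

theory Defs
  imports "HOL-Analysis.Analysis" "HOL-Library.Extended_Real"
begin

definition prob_simplex :: "(real ^ 'n::finite) set" where
  "prob_simplex = {p. (\<forall>i. 0 \<le> p $ i) \<and> sum (\<lambda>i. p $ i) UNIV = 1}"

text \<open>Loss matrix L in R_+^(n x k): L $ i $ t; the column l_t is column t L.\<close>
definition loss_matrix :: "real ^ 'k::finite ^ 'n::finite \<Rightarrow> bool" where
  "loss_matrix L \<longleftrightarrow> (\<forall>i t. 0 \<le> L $ i $ t)"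

definition argmin_loss :: "real ^ 'k::finite ^ 'n::finite \<Rightarrow> real ^ 'n \<Rightarrow> 'k set" where
  "argmin_loss L p = {t. \<forall>t'. p \<bullet> column t L \<le> p \<bullet> column t' L}"

definition standing_assumption :: "real ^ 'k::finite ^ 'n::finite \<Rightarrow> bool" where
  "standing_assumption L \<longleftrightarrow> (\<forall>t. \<exists>p\<in>prob_simplex. argmin_loss L p = {t})"

definition surrogate :: "('d::euclidean_space) set \<Rightarrow> ('d \<Rightarrow> real ^ 'n::finite) \<Rightarrow> bool" where
  "surrogate C psi \<longleftrightarrow> convex C \<and> (\<forall>u\<in>C. \<forall>i. 0 \<le> psi u $ i)"

text \<open>Calibration; infima taken in the extended reals (inf of empty set = +infinity).\<close>
definition calibrated ::
  "real ^ 'k::finite ^ 'n::finite \<Rightarrow> ('d::euclidean_space) set \<Rightarrow> ('d \<Rightarrow> real ^ 'n) \<Rightarrow> bool" where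
  "calibrated L C psi \<longleftrightarrow> (\<exists>pred :: 'd \<Rightarrow> 'k. \<forall>p\<in>prob_simplex.
     (INF u\<in>{u\<in>C. pred u \<notin> argmin_loss L p}. ereal (p \<bullet> psi u))
       > (INF u\<in>C. ereal (p \<bullet> psi u)))"

definition S_psi :: "('d::euclidean_space) set \<Rightarrow> ('d \<Rightarrow> real ^ 'n::finite) \<Rightarrow> (real ^ 'n) set" where
  "S_psi C psi = convex hull (psi ` C)"

definition trigger_set :: "real ^ 'k::finite ^ 'n::finite \<Rightarrow> 'k \<Rightarrow> (real ^ 'n) set" where
  "trigger_set L t = {p\<in>prob_simplex. t \<in> argmin_loss L p}"

definition normal_set ::
  "('d::euclidean_space) set \<Rightarrow> ('d \<Rightarrow> real ^ 'n::finite) \<Rightarrow> real ^ 'n \<Rightarrow> (real ^ 'n) set" where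
  "normal_set C psi z = {p\<in>prob_simplex. p \<bullet> z = (INF z'\<in>S_psi C psi. p \<bullet> z')}"

end

theory Submission
  imports Defs
begin

(* Fix z in S_psi = conv(psi(C)) and write z as a convex combination of
   finitely many points psi(u) with positive weights.  If p is a normal vector at z,
   i.e. the linear functional p . _ is minimised over S_psi at z, then it is also
   minimised at every point of the combination carrying positive weight; pick one such
   point psi(u1) once and for all (independently of p).  Then u1 minimises p . psi(_)
   over C, so calibration forces pred(u1) to be an optimal target for p: otherwise the
   infimum over the "wrong" predictions would not exceed the overall infimum.  Hence
   every normal vector at z lies in the trigger set of t = pred(u1). *)

text \<open>A point of a convex hull is a convex combination of points of A; any summand with
  positive weight attains the minimum of every linear functional minimised at that point.\<close>
lemma convex_hull_support_point:
  fixes A :: "'a::real_inner set"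
  assumes z: "z \<in> convex hull A"
  shows "\<exists>a\<in>A. \<forall>p. (\<forall>x\<in>convex hull A. p \<bullet> z \<le> p \<bullet> x) \<longrightarrow> p \<bullet> a = p \<bullet> z"
proof -
  obtain S w where S: "finite S" "S \<subseteq> A" and w_nn: "\<forall>x\<in>S. 0 \<le> w x"
    and w_sum: "sum w S = 1" and comb: "(\<Sum>v\<in>S. w v *\<^sub>R v) = z"
    using z unfolding convex_hull_explicit by blast
  obtain a where a: "a \<in> S" "w a > 0"
  proof -
    have "\<not> (\<forall>x\<in>S. w x \<le> 0)"
      using sum_nonpos[of S w] w_sum by auto
    then show thesis using that by (auto simp: not_le)
  qed
  have "p \<bullet> a = p \<bullet> z" if min: "\<And>x. x \<in> convex hull A \<Longrightarrow> p \<bullet> z \<le> p \<bullet> x" for p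
  proof -
    have excess_nn: "0 \<le> w x * (p \<bullet> x - p \<bullet> z)" if "x \<in> S" for x
      using that w_nn min[of x] S(2) hull_subset by (fastforce intro: mult_nonneg_nonneg)
    have "(\<Sum>x\<in>S. w x * (p \<bullet> x - p \<bullet> z)) = (\<Sum>x\<in>S. w x * (p \<bullet> x)) - sum w S * (p \<bullet> z)"
      by (simp add: right_diff_distrib sum_subtractf sum_distrib_right)
    also have "(\<Sum>x\<in>S. w x * (p \<bullet> x)) = p \<bullet> z"
      using comb[symmetric] by (simp add: inner_sum_right)
    finally have "(\<Sum>x\<in>S. w x * (p \<bullet> x - p \<bullet> z)) = 0" using w_sum by simp
    then have "w a * (p \<bullet> a - p \<bullet> z) = 0"
      using sum_nonneg_eq_0_iff[OF S(1) excess_nn] a(1) by simp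
    then show "p \<bullet> a = p \<bullet> z" using a(2) by simp
  qed
  then show ?thesis using a(1) S(2) by blast
qed

lemma prob_simplex_inner_nonneg:
  assumes "p \<in> prob_simplex" and "\<And>i. 0 \<le> x $ i"
  shows "0 \<le> p \<bullet> x"
  using assms unfolding prob_simplex_def inner_vec_def
  by (auto intro!: sum_nonneg mult_nonneg_nonneg)

text \<open>The nonnegative orthant is convex, so S_psi of a nonnegative surrogate stays in it.\<close>
lemma S_psi_nonneg:
  assumes "surrogate C psi" and "x \<in> S_psi C psi"
  shows "0 \<le> x $ i"
proof -
  have "convex hull (psi ` C) \<subseteq> {x. \<forall>i. 0 \<le> x $ i}"
  proof (rule hull_minimal)
    show "psi ` C \<subseteq> {x. \<forall>i. 0 \<le> x $ i}"
      using assms(1) unfolding surrogate_def by blast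
    show "convex {x::real ^ 'n. \<forall>i. 0 \<le> x $ i}"
      unfolding convex_def by clarsimp
  qed
  then show ?thesis using assms(2) unfolding S_psi_def by blast
qed

text \<open>A normal vector at z minimises its linear functional over S_psi at z; the defining
  infimum is a genuine lower bound since the functional is bounded below by 0.\<close>
lemma normal_set_minimises:
  assumes "surrogate C psi" and p: "p \<in> normal_set C psi z" and x: "x \<in> S_psi C psi"
  shows "p \<bullet> z \<le> p \<bullet> x"
proof -
  have "p \<in> prob_simplex" and pz: "p \<bullet> z = (INF z'\<in>S_psi C psi. p \<bullet> z')"
    using p unfolding normal_set_def by auto
  then have "bdd_below ((\<lambda>z'. p \<bullet> z') ` S_psi C psi)"
    using S_psi_nonneg[OF assms(1)] prob_simplex_inner_nonneg
    by (intro bdd_belowI2[of _ 0]) blast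
  then show ?thesis unfolding pz using x by (intro cInf_lower imageI)
qed

lemma calibrated_pred_at_minimiser:
  assumes pred: "\<forall>p\<in>prob_simplex.
     (INF u\<in>{u\<in>C. pred u \<notin> argmin_loss L p}. ereal (p \<bullet> psi u))
       > (INF u\<in>C. ereal (p \<bullet> psi u))"
    and p: "p \<in> prob_simplex" and u1: "u1 \<in> C"
    and opt: "\<And>u. u \<in> C \<Longrightarrow> p \<bullet> psi u1 \<le> p \<bullet> psi u"
  shows "pred u1 \<in> argmin_loss L p"
proof (rule ccontr)
  assume wrong: "pred u1 \<notin> argmin_loss L p"
  have "(INF u\<in>C. ereal (p \<bullet> psi u)) = ereal (p \<bullet> psi u1)"
    by (rule antisym) (auto intro!: INF_lower INF_greatest u1 opt)
  moreover have "(INF u\<in>{u\<in>C. pred u \<notin> argmin_loss L p}. ereal (p \<bullet> psi u))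
      \<le> ereal (p \<bullet> psi u1)"
    using u1 wrong by (intro INF_lower) auto
  ultimately show False using pred p by fastforce
qed

theorem mainTheorem3:
  fixes L :: "real ^ 'k::finite ^ 'n::finite"
    and C :: "'d::euclidean_space set"
    and psi :: "'d \<Rightarrow> real ^ 'n"
  assumes "loss_matrix L"
    and "standing_assumption L"
    and "surrogate C psi"
    and "calibrated L C psi"
  shows "\<forall>z\<in>S_psi C psi. \<exists>t. normal_set C psi z \<subseteq> trigger_set L t"
proof
  fix z assume z: "z \<in> S_psi C psi"
  obtain pred :: "'d \<Rightarrow> 'k" where pred: "\<forall>p\<in>prob_simplex.
     (INF u\<in>{u\<in>C. pred u \<notin> argmin_loss L p}. ereal (p \<bullet> psi u))
       > (INF u\<in>C. ereal (p \<bullet> psi u))"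
    using assms(4) unfolding calibrated_def by blast
  obtain a where a: "a \<in> psi ` C" and support:
      "\<forall>p. (\<forall>x\<in>S_psi C psi. p \<bullet> z \<le> p \<bullet> x) \<longrightarrow> p \<bullet> a = p \<bullet> z"
    using convex_hull_support_point[OF z[unfolded S_psi_def]] unfolding S_psi_def ..
  from a obtain u1 where u1: "u1 \<in> C" "a = psi u1" ..
  have "p \<in> trigger_set L (pred u1)" if p: "p \<in> normal_set C psi z" for p
  proof -
    have min: "\<forall>x\<in>S_psi C psi. p \<bullet> z \<le> p \<bullet> x"
      by (intro ballI normal_set_minimises[OF assms(3) p])
    have attained: "p \<bullet> psi u1 = p \<bullet> z"
      using support[THEN spec, THEN mp, OF min] u1(2) by simp
    have opt: "p \<bullet> psi u1 \<le> p \<bullet> psi u" if "u \<in> C" for u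
    proof -
      have "psi u \<in> S_psi C psi"
        using that unfolding S_psi_def by (intro hull_inc imageI)
      then show ?thesis using min attained by simp
    qed
    have p_simplex: "p \<in> prob_simplex" using p unfolding normal_set_def by simp
    have "pred u1 \<in> argmin_loss L p"
      by (rule calibrated_pred_at_minimiser[OF pred p_simplex u1(1) opt])
    then show ?thesis using p_simplex unfolding trigger_set_def by simp
  qed
  then show "\<exists>t. normal_set C psi z \<subseteq> trigger_set L t" by blast
qed

end
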